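(* Let $P$ be a finite semipure poset of length $n$ with a unique maximum element, $t\ge1$, $\lambda_P:\mathrm{Cov}(\hat P)\to L_P$ an EL-labeling, and $\lambda$ the induced EL-labeling of $\widehat{P*T_{t,n}}$. Then the number of ascent free maximal chains of $\widehat{P*T_{t,n}}$ of length $n+2$ under $\lambda$ equals $$\sum_{\substack{w\in\mathrm{NDA}_{n+1}(L_P)\\ w_1\not\le w_2,\ w_n\not\le w_{n+1}}} c(w)\,t^{\mathrm{asc}(w)+1}(1+t)^{n-1-2\,\mathrm{asc}(w)},$$ where $c(w)$ is the number of maximal chains of $P\uplus\{\hat 0_P\}$ (i.e. of $\hat P$ with $\hat 1_P$ removed) whose label sequence under $\lambda_P$ is $w$.
   Context: Rees product $P*Q$ of semipure posets (rank $r_P(x)$ = common length of maximal chains of $P_{\le x}$): the set $\{(p,q): r_P(p)\ge r_Q(q)\}$ with $(p_1,q_1)\le(p_2,q_2)$ iff $p_1\le p_2$, $q_1\le q_2$, $r_P(p_2)-r_P(p_1)\ge r_Q(q_2)-r_Q(q_1)$. $T_{t,n}$: sequences over $\{1,\dots,t\}$ of length $\le n$ ordered by prefix, minimum $\hat 0_T$, rank = length. $\hat Q$: $Q$ with new minimum and maximum adjoined; for $\hat P$ these are $\hat 0_P,\hat 1_P$. An edge labeling $\lambda:\mathrm{Cov}(Q)\to L$ ($L$ a poset) of a bounded poset is an EL-labeling if each interval $[x,y]$ has a unique maximal chain with weakly increasing labels and its label sequence lexicographically precedes those of all other maximal chains of $[x,y]$. The induced labeling $\lambda$ of $\widehat{P*T_{t,n}}$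 takes values in $L_P\times\{0<1\}$ (product order): the minimum of $\widehat{P*T_{t,n}}$ is identified with $(\hat 0_P,\hat 0_T)$; for a cover $(x,k)\lessdot(y,l)$ with $(y,l)\ne\hat 1$, $\lambda=(\lambda_P(x,y),1)$ if $k<l$ and $(\lambda_P(x,y),0)$ if $k=l$; for a cover $(x,k)\lessdot\hat 1$, $\lambda=(\lambda_P(x,\hat 1_P),0)$. A maximal chain is ascent free if no two consecutive labels $a,b$ satisfy $a\le b$. For a word $w=w_1\cdots w_N$ over a poset $A$, $i\in[N-1]$ is an ascent if $w_i\le w_{i+1}$, $\mathrm{asc}(w)$ is the number of ascents, $i\in[N-2]$ is a double ascent if $w_i\le w_{i+1}\le w_{i+2}$, and $\mathrm{NDA}_N(A)$ is the set of words of length $N$ over $A$ with no double ascents. *)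

theory Defs
  imports Complex_Main "HOL-Library.Product_Order" "HOL-Library.Sublist"
begin

definition cover :: "'b set \<Rightarrow> ('b \<Rightarrow> 'b \<Rightarrow> bool) \<Rightarrow> 'b \<Rightarrow> 'b \<Rightarrow> bool" where
  "cover X le x y \<longleftrightarrow> x \<in> X \<and> y \<in> X \<and> le x y \<and> x \<noteq> y \<and>
     \<not> (\<exists>z\<in>X. le x z \<and> le z y \<and> z \<noteq> x \<and> z \<noteq> y)"

text \<open>Its length is (length of the list) - 1.\<close>
definition maxchain :: "'b set \<Rightarrow> ('b \<Rightarrow> 'b \<Rightarrow> bool) \<Rightarrow> 'b list \<Rightarrow> bool" where
  "maxchain X le c \<longleftrightarrow> c \<noteq> [] \<and> set c \<subseteq> X \<and>
     (\<forall>z\<in>X. le z (hd c) \<longrightarrow> z = hd c) \<and>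
     (\<forall>z\<in>X. le (last c) z \<longrightarrow> z = last c) \<and>
     (\<forall>i. Suc i < length c \<longrightarrow> cover X le (c ! i) (c ! Suc i))"

definition down_set :: "'b set \<Rightarrow> ('b \<Rightarrow> 'b \<Rightarrow> bool) \<Rightarrow> 'b \<Rightarrow> 'b set" where
  "down_set X le x = {y \<in> X. le y x}"

definition interval :: "'b set \<Rightarrow> ('b \<Rightarrow> 'b \<Rightarrow> bool) \<Rightarrow> 'b \<Rightarrow> 'b \<Rightarrow> 'b set" where
  "interval X le x y = {z \<in> X. le x z \<and> le z y}"

definition semipure :: "'b set \<Rightarrow> ('b \<Rightarrow> 'b \<Rightarrow> bool) \<Rightarrow> bool" where
  "semipure X le \<longleftrightarrow> (\<forall>x\<in>X. \<exists>k. \<forall>c. maxchain (down_set X le x) le c \<longrightarrow> length c = Suc k)"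

definition prank :: "'b set \<Rightarrow> ('b \<Rightarrow> 'b \<Rightarrow> bool) \<Rightarrow> 'b \<Rightarrow> nat" where
  "prank X le x = (SOME k. \<forall>c. maxchain (down_set X le x) le c \<longrightarrow> length c = Suc k)"

definition poset_length :: "'b set \<Rightarrow> ('b \<Rightarrow> 'b \<Rightarrow> bool) \<Rightarrow> nat" where
  "poset_length X le = Max {length c - 1 | c. maxchain X le c}"

definition labels :: "('b \<Rightarrow> 'b \<Rightarrow> 'l) \<Rightarrow> 'b list \<Rightarrow> 'l list" where
  "labels lam c = map (\<lambda>i. lam (c ! i) (c ! Suc i)) [0..<length c - 1]"

definition weakly_increasing :: "'l::order list \<Rightarrow> bool" where
  "weakly_increasing w \<longleftrightarrow> (\<forall>i. Suc i < length w \<longrightarrow> w ! i \<le> w ! Suc i)"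

definition lex_less :: "'l::order list \<Rightarrow> 'l list \<Rightarrow> bool" where
  "lex_less u v \<longleftrightarrow> (u, v) \<in> lexord {(a, b). a < b}"

definition EL_labeling :: "'b set \<Rightarrow> ('b \<Rightarrow> 'b \<Rightarrow> bool) \<Rightarrow> ('b \<Rightarrow> 'b \<Rightarrow> 'l::order) \<Rightarrow> bool" where
  "EL_labeling X le lam \<longleftrightarrow>
     (\<forall>x\<in>X. \<forall>y\<in>X. le x y \<longrightarrow>
        (\<exists>!c. maxchain (interval X le x y) le c \<and> weakly_increasing (labels lam c)) \<and>
        (\<forall>c c'. maxchain (interval X le x y) le c \<and> weakly_increasing (labels lam c) \<and>
                maxchain (interval X le x y) le c' \<and> c' \<noteq> c \<longrightarrow>
                lex_less (labels lam c) (labels lam c')))"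

definition ascent_free :: "'l::order list \<Rightarrow> bool" where
  "ascent_free w \<longleftrightarrow> (\<forall>i. Suc i < length w \<longrightarrow> \<not> w ! i \<le> w ! Suc i)"

text \<open>Number of ascents (positions i with w_i <= w_{i+1}; 0-indexed here).\<close>
definition asc :: "'l::order list \<Rightarrow> nat" where
  "asc w = card {i. Suc i < length w \<and> w ! i \<le> w ! Suc i}"

definition no_double_ascent :: "'l::order list \<Rightarrow> bool" where
  "no_double_ascent w \<longleftrightarrow>
     (\<forall>i. Suc (Suc i) < length w \<longrightarrow> \<not> (w ! i \<le> w ! Suc i \<and> w ! Suc i \<le> w ! Suc (Suc i)))"

definition NDA :: "nat \<Rightarrow> 'l::order list set" where
  "NDA N = {w. length w = N \<and> no_double_ascent w}"

datatype 'a hat = Bot | Elm 'a | Top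

fun hat_le :: "('a \<Rightarrow> 'a \<Rightarrow> bool) \<Rightarrow> 'a hat \<Rightarrow> 'a hat \<Rightarrow> bool" where
  "hat_le le Bot _ = True"
| "hat_le le (Elm x) (Elm y) = le x y"
| "hat_le le _ Top = True"
| "hat_le le _ _ = False"

definition hat_carrier :: "'a set \<Rightarrow> 'a hat set" where
  "hat_carrier X = insert Bot (insert Top (Elm ` X))"

text \<open>T_{t,n}: words over {1..t} of length at most n, ordered by prefix, rank = length.\<close>
definition T_carrier :: "nat \<Rightarrow> nat \<Rightarrow> nat list set" where
  "T_carrier t n = {q. set q \<subseteq> {1..t} \<and> length q \<le> n}"

definition rees_carrier :: "'a::order set \<Rightarrow> nat \<Rightarrow> nat \<Rightarrow> ('a \<times> nat list) set" where
  "rees_carrier P t n =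
     {(p, q). p \<in> P \<and> q \<in> T_carrier t n \<and> prank P (\<le>) p \<ge> length q}"

fun rees_le :: "'a::order set \<Rightarrow> ('a \<times> nat list) \<Rightarrow> ('a \<times> nat list) \<Rightarrow> bool" where
  "rees_le P (p1, q1) (p2, q2) \<longleftrightarrow> p1 \<le> p2 \<and> prefix q1 q2 \<and>
     int (prank P (\<le>) p2) - int (prank P (\<le>) p1) \<ge> int (length q2) - int (length q1)"

text \<open>The induced labeling of the hat of P * T, with values in L_P x {0 < 1}
  (here {0 < 1} is rendered as bool, False < True). The minimum Bot of the hat
  is identified with (hat-0 of P, empty word).\<close>
fun hat_fst :: "('a \<times> nat list) hat \<Rightarrow> 'a hat" where
  "hat_fst Bot = Bot"
| "hat_fst (Elm (x, k)) = Elm x"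
| "hat_fst Top = Top"

fun hat_snd :: "('a \<times> nat list) hat \<Rightarrow> nat list" where
  "hat_snd Bot = []"
| "hat_snd (Elm (x, k)) = k"
| "hat_snd Top = []"

fun induced_lab :: "('a hat \<Rightarrow> 'a hat \<Rightarrow> 'l) \<Rightarrow> ('a \<times> nat list) hat \<Rightarrow> ('a \<times> nat list) hat \<Rightarrow> 'l \<times> bool" where
  "induced_lab lamP u (Elm (y, l)) = (lamP (hat_fst u) (Elm y), strict_prefix (hat_snd u) l)"
| "induced_lab lamP u Top = (lamP (hat_fst u) Top, False)"
| "induced_lab lamP u Bot = undefined"

definition chain_count :: "'a::order set \<Rightarrow> ('a hat \<Rightarrow> 'a hat \<Rightarrow> 'l) \<Rightarrow> 'l list \<Rightarrow> nat" where
  "chain_count P lamP w =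
     card {c. maxchain (insert Bot (Elm ` P)) (hat_le (\<le>)) c \<and> labels lamP c = w}"

end

theory Submission
  imports Defs
begin

(* Let m be the maximum of P.  Semipureness forces every maximal chain of P with a new
   minimum adjoined to be  Bot, x_0 < x_1 < ... < x_n = m  with consecutive covers and
   rank x_i = i; we call x_0 ... x_n a flag and write w for its label word.  A maximal
   chain of length n + 2 of the hat of P * T_{t,n} is  Bot, (x_0,q_0), ..., (x_n,q_n), Top
   where x is a flag, q_0 is empty and each q_{i+1} is q_i, possibly extended by one letter;
   so it is encoded by the flag and a step sequence s in ({None} + {1..t})^n.  Its labels
   are (w_0,0), (w_1,b_1), ..., (w_n,b_n), (lamP(m,Top),0), where b_j says that step j-1 is
   a letter.  The increasing chain of [x_{n-1}, Top] is x_{n-1} < m < Top, so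
   w_n <= lamP(m,Top); hence the chain is ascent free iff w_0 is not <= w_1, the last step
   is a letter, and each ascent w_j <= w_{j+1} (1 <= j < n) forces step j-1 to be a letter
   and step j to be empty.  For fixed w these constraints are counted by a product formula,
   giving t^(asc w + 1) (1+t)^(n - 1 - 2 asc w) when w has no double ascent and its last
   pair is no ascent, and 0 otherwise.  Grouping the flags by label word gives the theorem. *)

lemma labels_length: "length (labels lam c) = length c - 1"
  unfolding labels_def by simp

lemma labels_nth: "i < length c - 1 \<Longrightarrow> labels lam c ! i = lam (c ! i) (c ! Suc i)"
  unfolding labels_def by (simp del: upt_Suc)

lemma prefix_length_eq: "prefix a b \<Longrightarrow> length b \<le> length a \<Longrightarrow> a = b"
  unfolding prefix_def by auto

lemma prefix_length_Suc:
  assumes "prefix a b" "length b \<le> Suc (length a)" shows "b = a \<or> (\<exists>x. b = a @ [x])"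
proof -
  obtain zs where "b = a @ zs" "length zs \<le> 1" using assms unfolding prefix_def by auto
  thus ?thesis by (cases zs) auto
qed

lemma strict_mono_bounded_id:
  fixes f :: "nat \<Rightarrow> nat"
  assumes inc: "\<forall>i<n. f i < f (Suc i)" and bd: "\<forall>i\<le>n. f i \<le> n"
  shows "\<forall>i\<le>n. f i = i"
proof -
  have lo: "i \<le> f i" if "i \<le> n" for i using that
  proof (induction i)
    case (Suc i)
    then show ?case using inc[rule_format, of i] by simp
  qed simp
  have hi: "f (n - j) \<le> n - j" if "j \<le> n" for j using that
  proof (induction j)
    case (Suc j)
    have "f (n - Suc j) < f (Suc (n - Suc j))" using inc Suc.prems by simp
    moreover have "Suc (n - Suc j) = n - j" using Suc.prems by simp
    ultimately show ?case using Suc by simp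
  qed (use bd in simp)
  show ?thesis using lo hi[of "n - _"] by (metis diff_diff_cancel diff_le_self le_antisym)
qed

section \<open>Ranks in a finite semipure poset with a maximum\<close>

locale semipure_top =
  fixes P :: "'a::order set" and n :: nat and m :: 'a
  assumes finite_P: "finite P" and semipure_P: "semipure P (\<le>)"
    and length_P: "poset_length P (\<le>) = n"
    and m_in_P: "m \<in> P" and m_max: "\<forall>x\<in>P. x \<le> m"
begin

abbreviation "rk \<equiv> prank P (\<le>)"
abbreviation "D \<equiv> down_set P (\<le>)"

lemma length_maxchain_down:
  assumes "x \<in> P" "maxchain (D x) (\<le>) c" shows "length c = Suc (rk x)"
proof -
  obtain k where "\<forall>c. maxchain (D x) (\<le>) c \<longrightarrow> length c = Suc k"
    using semipure_P assms(1) unfolding semipure_def by blast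
  hence "\<forall>c. maxchain (D x) (\<le>) c \<longrightarrow> length c = Suc (rk x)"
    unfolding prank_def by (rule someI)
  thus ?thesis using assms(2) by blast
qed

lemma maxchain_down_snoc:
  assumes c: "maxchain (D y) (\<le>) c" "last c = y" and yx: "cover P (\<le>) y x"
  shows "maxchain (D x) (\<le>) (c @ [x])"
proof -
  have "y \<le> x" "y \<in> P" "x \<in> P" using yx unfolding cover_def by auto
  have cne: "c \<noteq> []" and cs: "set c \<subseteq> D y"
    and hd_min: "\<forall>z\<in>D y. z \<le> hd c \<longrightarrow> z = hd c"
    and cov: "\<forall>i. Suc i < length c \<longrightarrow> cover (D y) (\<le>) (c ! i) (c ! Suc i)"
    using c(1) unfolding maxchain_def by auto
  have Dsub: "D y \<subseteq> D x" using \<open>y \<le> x\<close> unfolding down_set_def by (auto intro: order_trans)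
  have "hd c \<le> y" using hd_in_set[OF cne] cs unfolding down_set_def by auto
  show ?thesis unfolding maxchain_def
  proof (intro conjI ballI allI impI)
    show "set (c @ [x]) \<subseteq> D x" using cs Dsub \<open>x \<in> P\<close> unfolding down_set_def by auto
  next
    fix z assume "z \<in> D x" "z \<le> hd (c @ [x])"
    hence "z \<in> D y" "z \<le> hd c" using cne \<open>hd c \<le> y\<close> unfolding down_set_def
      by (auto intro: order_trans)
    thus "z = hd (c @ [x])" using hd_min cne by auto
  next
    fix z assume "z \<in> D x" "last (c @ [x]) \<le> z"
    thus "z = last (c @ [x])" unfolding down_set_def by auto
  next
    fix i assume i: "Suc i < length (c @ [x])"
    show "cover (D x) (\<le>) ((c @ [x]) ! i) ((c @ [x]) ! Suc i)"
    proof (cases "Suc i < length c")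
      case True
      thus ?thesis using cov Dsub unfolding cover_def down_set_def
        by (auto simp: nth_append intro: order_trans)
    next
      case False
      hence "i = length c - 1" using i by simp
      hence "(c @ [x]) ! i = y" "(c @ [x]) ! Suc i = x"
        using c(2) cne by (auto simp: nth_append last_conv_nth)
      thus ?thesis using yx unfolding cover_def down_set_def by auto
    qed
  qed simp
qed

lemma exists_maxchain_down:
  assumes "x \<in> P" shows "\<exists>c. maxchain (D x) (\<le>) c \<and> last c = x"
  using assms
proof (induction "card {z\<in>P. z < x}" arbitrary: x rule: less_induct)
  case less
  show ?case
  proof (cases "{z\<in>P. z < x} = {}")
    case True
    have "maxchain (D x) (\<le>) [x]" using True less.prems unfolding maxchain_def down_set_def
      by (auto simp: order.order_iff_strict)
    thus ?thesis by auto
  next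
    case False
    obtain y where y: "y \<in> {z\<in>P. z < x}" "\<forall>b\<in>{z\<in>P. z < x}. y \<le> b \<longrightarrow> y = b"
      using finite_has_maximal[OF _ False] finite_P by auto
    have cv: "cover P (\<le>) y x" using y less.prems unfolding cover_def
      by (auto simp: order.order_iff_strict)
    have "{z\<in>P. z < y} \<subset> {z\<in>P. z < x}" using y by auto
    hence "card {z\<in>P. z < y} < card {z\<in>P. z < x}" using finite_P by (intro psubset_card_mono) auto
    then obtain c where "maxchain (D y) (\<le>) c" "last c = y" using less.hyps y by blast
    thus ?thesis using maxchain_down_snoc[OF _ _ cv] by force
  qed
qed

lemma rank_cover: assumes "cover P (\<le>) y x" shows "rk x = Suc (rk y)"
proof -
  have "y \<in> P" "x \<in> P" using assms unfolding cover_def by auto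
  obtain c where c: "maxchain (D y) (\<le>) c" "last c = y" using exists_maxchain_down \<open>y \<in> P\<close> by blast
  have "length (c @ [x]) = Suc (rk x)"
    using length_maxchain_down[OF \<open>x \<in> P\<close> maxchain_down_snoc[OF c assms]] .
  moreover have "length c = Suc (rk y)" using length_maxchain_down[OF \<open>y \<in> P\<close> c(1)] .
  ultimately show ?thesis by simp
qed

lemma rank_minimal: assumes "x \<in> P" "\<forall>z\<in>P. z \<le> x \<longrightarrow> z = x" shows "rk x = 0"
proof -
  have "maxchain (D x) (\<le>) [x]" using assms unfolding maxchain_def down_set_def cover_def by auto
  from length_maxchain_down[OF assms(1) this] show ?thesis by simp
qed

lemma rank_strict_mono: assumes "x \<in> P" "y \<in> P" "x < y" shows "rk x < rk y"
  using assms
proof (induction "card {z\<in>P. z < y}" arbitrary: y rule: less_induct)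
  case less
  have ne: "{z\<in>P. x \<le> z \<and> z < y} \<noteq> {}" using less.prems by auto
  obtain z where z: "z \<in> {z\<in>P. x \<le> z \<and> z < y}" "\<forall>b\<in>{z\<in>P. x \<le> z \<and> z < y}. z \<le> b \<longrightarrow> z = b"
    using finite_has_maximal[OF _ ne] finite_P by auto
  have "cover P (\<le>) z y" using z less.prems unfolding cover_def
    by (auto simp: order.order_iff_strict intro: order.trans)
  hence ry: "rk y = Suc (rk z)" by (rule rank_cover)
  show ?case
  proof (cases "z = x")
    case False
    hence "x < z" using z by auto
    have "{w\<in>P. w < z} \<subset> {w\<in>P. w < y}" using z by auto
    hence "card {w\<in>P. w < z} < card {w\<in>P. w < y}" using finite_P by (intro psubset_card_mono) auto
    hence "rk x < rk z" using less.hyps[of z] z \<open>x < z\<close> less.prems by auto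
    thus ?thesis using ry by simp
  qed (use ry in simp)
qed

lemma rank_top: "rk m = n"
proof -
  have Dm: "D m = P" using m_max unfolding down_set_def by auto
  obtain c where c: "maxchain P (\<le>) c" using exists_maxchain_down[OF m_in_P] Dm by auto
  have len: "length c' - 1 = rk m" if "maxchain P (\<le>) c'" for c'
    using length_maxchain_down[OF m_in_P] Dm that by simp
  have "{length c - 1 | c. maxchain P (\<le>) c} = {rk m}"
  proof
    show "{length c - 1 | c. maxchain P (\<le>) c} \<subseteq> {rk m}" using len by auto
    have "rk m = length c - 1 \<and> maxchain P (\<le>) c" using len[OF c] c by simp
    thus "{rk m} \<subseteq> {length c - 1 | c. maxchain P (\<le>) c}" by blast
  qed
  thus ?thesis using length_P unfolding poset_length_def by simp
qed

lemma rank_le: assumes "x \<in> P" shows "rk x \<le> n"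
proof (cases "x = m")
  case False
  hence "x < m" using m_max assms by (auto simp: order.order_iff_strict)
  thus ?thesis using rank_strict_mono[OF assms m_in_P] rank_top by simp
qed (use rank_top in simp)

lemma cover_of_rank_step:
  assumes "x \<in> P" "y \<in> P" "x < y" "rk y = Suc (rk x)" shows "cover P (\<le>) x y"
proof -
  have "\<not> (x < z \<and> z < y)" if "z \<in> P" for z
    using rank_strict_mono[of x z] rank_strict_mono[of z y] assms that by auto
  thus ?thesis using assms unfolding cover_def by (auto simp: order.order_iff_strict)
qed

end

section \<open>Flags\<close>

text \<open>A flag is a saturated chain \<open>x\<^sub>0 \<lessdot> \<dots> \<lessdot> x\<^sub>n\<close> of \<open>P\<close> starting at a minimal element;
  these are exactly the maximal chains of \<open>P\<close> with a new minimum adjoined.\<close>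
definition flag :: "'a::order set \<Rightarrow> nat \<Rightarrow> 'a list \<Rightarrow> bool" where
  "flag P n xs \<longleftrightarrow> length xs = Suc n \<and> set xs \<subseteq> P \<and> (\<forall>z\<in>P. z \<le> xs ! 0 \<longrightarrow> z = xs ! 0)
     \<and> (\<forall>i<n. cover P (\<le>) (xs ! i) (xs ! Suc i))"

abbreviation hat0 :: "'a set \<Rightarrow> 'a hat set" where "hat0 P \<equiv> insert Bot (Elm ` P)"

lemma cover_hat0_Elm:
  "cover (hat0 P) (hat_le (\<le>)) (Elm a) (Elm b) \<longleftrightarrow> cover P (\<le>) a (b :: 'a::order)"
  unfolding cover_def by force

context semipure_top
begin

lemma flag_rank: assumes "flag P n xs" "i \<le> n" shows "rk (xs ! i) = i"
  using assms(2)
proof (induction i)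
  case 0
  have "xs ! 0 \<in> P" using assms(1) nth_mem[of 0 xs] unfolding flag_def by auto
  thus ?case using rank_minimal assms(1) unfolding flag_def by auto
next
  case (Suc i)
  hence "cover P (\<le>) (xs ! i) (xs ! Suc i)" using assms(1) unfolding flag_def by auto
  thus ?case using rank_cover Suc by simp
qed

lemma flag_last: assumes "flag P n xs" shows "xs ! n = m"
proof (rule ccontr)
  assume "xs ! n \<noteq> m"
  moreover have "xs ! n \<in> P" using assms unfolding flag_def by auto
  ultimately have "rk (xs ! n) < rk m" using rank_strict_mono m_in_P m_max
    by (auto simp: order.order_iff_strict)
  thus False using flag_rank[OF assms] rank_top by simp
qed

lemma finite_flags: "finite {xs. flag P n xs}"
  by (rule finite_subset[OF _ finite_lists_length_eq[OF finite_P, of "Suc n"]])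
     (auto simp: flag_def)

lemma maxchain_hat0_iff_flag:
  "maxchain (hat0 P) (hat_le (\<le>)) (Bot # map Elm xs) \<longleftrightarrow> flag P n xs"
proof
  let ?c = "Bot # map Elm xs"
  assume mc: "maxchain (hat0 P) (hat_le (\<le>)) ?c"
  have cov: "\<And>i. Suc i < length ?c \<Longrightarrow> cover (hat0 P) (hat_le (\<le>)) (?c ! i) (?c ! Suc i)"
    and setP: "set xs \<subseteq> P" using mc unfolding maxchain_def by auto
  have xs_ne: "xs \<noteq> []" using mc m_in_P unfolding maxchain_def by force
  have last_m: "last xs = m"
  proof -
    have "\<forall>z\<in>hat0 P. hat_le (\<le>) (Elm (last xs)) z \<longrightarrow> z = Elm (last xs)"
      using mc xs_ne unfolding maxchain_def by (metis last.simps last_map list.map_disc_iff)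
    moreover have "last xs \<le> m" using m_max setP xs_ne last_in_set by blast
    ultimately show ?thesis using m_in_P by auto
  qed
  have "cover (hat0 P) (hat_le (\<le>)) Bot (Elm (xs ! 0))" using cov[of 0] xs_ne by auto
  hence min0: "\<forall>z\<in>P. z \<le> xs ! 0 \<longrightarrow> z = xs ! 0" unfolding cover_def by force
  have covP: "cover P (\<le>) (xs ! i) (xs ! Suc i)" if "Suc i < length xs" for i
  proof -
    have "cover (hat0 P) (hat_le (\<le>)) (Elm (xs ! i)) (Elm (xs ! Suc i))"
      using cov[of "Suc i"] that by simp
    thus ?thesis using cover_hat0_Elm by blast
  qed
  have "rk (xs ! i) = i" if "i < length xs" for i using that
  proof (induction i)
    case 0
    have "xs ! 0 \<in> P" using setP xs_ne by (metis hd_conv_nth hd_in_set subsetD)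
    thus ?case using rank_minimal min0 by auto
  next
    case (Suc i) thus ?case using rank_cover[OF covP] by simp
  qed
  hence "rk (last xs) = length xs - 1" using xs_ne by (simp add: last_conv_nth)
  hence "length xs = Suc n" using last_m rank_top xs_ne by (cases xs) auto
  thus "flag P n xs" unfolding flag_def using setP min0 covP by auto
next
  assume fl: "flag P n xs"
  have len: "length xs = Suc n" and setP: "set xs \<subseteq> P"
    and min0: "\<forall>z\<in>P. z \<le> xs ! 0 \<longrightarrow> z = xs ! 0"
    and covP: "\<forall>i<n. cover P (\<le>) (xs ! i) (xs ! Suc i)" using fl unfolding flag_def by auto
  have last: "last (Bot # map Elm xs) = Elm m"
    using flag_last[OF fl] len by (cases xs) (auto simp: last_map last_conv_nth)
  show "maxchain (hat0 P) (hat_le (\<le>)) (Bot # map Elm xs)" unfolding maxchain_def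
  proof (intro conjI ballI allI impI)
    fix z assume "z \<in> hat0 P" "hat_le (\<le>) (last (Bot # map Elm xs)) z"
    thus "z = last (Bot # map Elm xs)" using m_max unfolding last
      by (auto intro: order.antisym)
  next
    fix i assume i: "Suc i < length (Bot # map Elm xs)"
    show "cover (hat0 P) (hat_le (\<le>)) ((Bot # map Elm xs) ! i) ((Bot # map Elm xs) ! Suc i)"
    proof (cases i)
      case 0
      have "xs ! 0 \<in> P" using setP len by (simp add: subset_iff)
      thus ?thesis using 0 len min0 unfolding cover_def by auto
    next
      case (Suc j)
      thus ?thesis using i covP len cover_hat0_Elm by auto
    qed
  qed (use setP in auto)
qed

lemma maxchain_hat0_shape:
  assumes mc: "maxchain (hat0 P) (hat_le (\<le>)) c" shows "\<exists>xs. c = Bot # map Elm xs"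
proof -
  have cne: "c \<noteq> []" and "Bot = hd c" using mc unfolding maxchain_def by auto
  hence c_eq: "c = Bot # tl c" by (cases c) auto
  have "\<exists>x. z = Elm x" if z: "z \<in> set (tl c)" for z
  proof -
    obtain i where "i < length (tl c)" "z = tl c ! i" using z by (auto simp: in_set_conv_nth)
    hence "Suc i < length c" "z = c ! Suc i" using cne by (auto simp: nth_tl)
    hence "cover (hat0 P) (hat_le (\<le>)) (c ! i) z" using mc unfolding maxchain_def by blast
    hence "z \<in> hat0 P" "z \<noteq> Bot" unfolding cover_def by (auto elim: hat_le.elims)
    thus ?thesis by auto
  qed
  hence "\<exists>xs. tl c = map Elm xs" by (auto simp: ex_map_conv)
  then obtain xs where "tl c = map Elm xs" by blast
  thus ?thesis using c_eq by auto
qed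

lemma chain_count_flags:
  "chain_count P lamP w = card {xs. flag P n xs \<and> labels lamP (Bot # map Elm xs) = w}"
proof -
  have "{c. maxchain (hat0 P) (hat_le (\<le>)) c \<and> labels lamP c = w}
      = (\<lambda>xs. Bot # map Elm xs) ` {xs. flag P n xs \<and> labels lamP (Bot # map Elm xs) = w}"
    using maxchain_hat0_shape maxchain_hat0_iff_flag by fastforce
  moreover have "inj (\<lambda>xs. Bot # map Elm (xs :: 'a list))" by (simp add: inj_def inj_map_eq_map)
  ultimately show ?thesis unfolding chain_count_def
    by (simp add: card_image inj_on_subset[of _ UNIV])
qed

end

section \<open>Step sequences admissible for a word\<close>

lemma card_lists_componentwise:
  assumes "\<forall>k<n. finite (A k)"
  shows "card {s. length s = n \<and> (\<forall>k<n. s ! k \<in> A k)} = (\<Prod>k<n. card (A k))"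
  using assms
proof (induction n)
  case 0
  have "{s. length s = 0 \<and> (\<forall>k<0. s ! k \<in> A k)} = {[]}" by auto
  thus ?case by simp
next
  case (Suc n)
  let ?S = "\<lambda>n. {s. length s = n \<and> (\<forall>k<n. s ! k \<in> A k)}"
  have eq: "?S (Suc n) = (\<lambda>(s, a). s @ [a]) ` (?S n \<times> A n)"
  proof (intro set_eqI iffI)
    fix s assume s: "s \<in> ?S (Suc n)"
    hence "s \<noteq> []" by auto
    then obtain u a where u: "s = u @ [a]" by (metis append_butlast_last_id)
    have "u \<in> ?S n" "a \<in> A n" using s unfolding u
      by (auto simp: nth_append) (metis less_SucI nth_append)
    thus "s \<in> (\<lambda>(s, a). s @ [a]) ` (?S n \<times> A n)" using u by auto
  qed (auto simp: nth_append less_Suc_eq)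
  have "inj_on (\<lambda>(s, a). s @ [a]) (?S n \<times> A n)" by (auto simp: inj_on_def)
  hence "card (?S (Suc n)) = card (?S n) * card (A n)"
    unfolding eq by (simp add: card_image card_cartesian_product)
  thus ?case using Suc by simp
qed

text \<open>A step of the \<open>T\<close>-coordinate is either empty (\<open>None\<close>) or a letter in \<open>{1..t}\<close>.\<close>
definition step_choices :: "nat \<Rightarrow> nat option set" where
  "step_choices t = insert None (Some ` {1..t})"

text \<open>Ascent-freeness forces step \<open>k\<close> to be a letter when \<open>k\<close> is the last step or
  \<open>w\<^sub>k\<^sub>+\<^sub>1 \<le> w\<^sub>k\<^sub>+\<^sub>2\<close>, and to be empty when \<open>k \<ge> 1\<close> and \<open>w\<^sub>k \<le> w\<^sub>k\<^sub>+\<^sub>1\<close>.\<close>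
definition must_rise :: "nat \<Rightarrow> 'l::order list \<Rightarrow> nat \<Rightarrow> bool" where
  "must_rise n w k \<longleftrightarrow> Suc k = n \<or> (k + 2 \<le> n \<and> w ! (k+1) \<le> w ! (k+2))"

definition must_stay :: "'l::order list \<Rightarrow> nat \<Rightarrow> bool" where
  "must_stay w k \<longleftrightarrow> 1 \<le> k \<and> w ! k \<le> w ! (k+1)"

definition allowed_steps :: "nat \<Rightarrow> nat \<Rightarrow> 'l::order list \<Rightarrow> nat \<Rightarrow> nat option set" where
  "allowed_steps t n w k =
     {z \<in> step_choices t. (must_rise n w k \<longrightarrow> z \<noteq> None) \<and> (must_stay w k \<longrightarrow> z = None)}"

definition admissible_steps :: "nat \<Rightarrow> nat \<Rightarrow> 'l::order list \<Rightarrow> nat option list set" where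
  "admissible_steps t n w = {s. length s = n \<and> (\<forall>k<n. s ! k \<in> allowed_steps t n w k)}"

lemma card_step_choices: "card (step_choices t) = Suc t"
  unfolding step_choices_def by (subst card_insert_disjoint) (auto simp: card_image)

lemma card_allowed_steps:
  "card (allowed_steps t n w k) =
     (if must_rise n w k \<and> must_stay w k then 0 else if must_rise n w k then t
      else if must_stay w k then 1 else Suc t)"
proof -
  have "allowed_steps t n w k =
     (if must_rise n w k \<and> must_stay w k then {} else if must_rise n w k then Some ` {1..t}
      else if must_stay w k then {None} else step_choices t)"
    unfolding allowed_steps_def step_choices_def by auto
  thus ?thesis using card_step_choices by (simp add: card_image)
qed

lemma forced_conflict_iff:
  fixes w :: "'l::order list"
  assumes len: "length w = Suc n" and n1: "n \<ge> 1" and w01: "\<not> w ! 0 \<le> w ! 1"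
  shows "(\<exists>k<n. must_rise n w k \<and> must_stay w k) \<longleftrightarrow>
           \<not> no_double_ascent w \<or> w ! (n - 1) \<le> w ! n"
proof
  assume "\<exists>k<n. must_rise n w k \<and> must_stay w k"
  then obtain k where k: "k < n" "must_rise n w k" "must_stay w k" by blast
  show "\<not> no_double_ascent w \<or> w ! (n - 1) \<le> w ! n"
  proof (cases "Suc k = n")
    case True thus ?thesis using k unfolding must_stay_def by (metis diff_Suc_1 Suc_eq_plus1)
  next
    case False
    hence "k + 2 \<le> n" "w ! (k+1) \<le> w ! (k+2)" using k unfolding must_rise_def by auto
    thus ?thesis using k len unfolding must_stay_def no_double_ascent_def
      by (metis Suc_eq_plus1 add_2_eq_Suc' le_imp_less_Suc)
  qed
next
  assume "\<not> no_double_ascent w \<or> w ! (n - 1) \<le> w ! n"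
  thus "\<exists>k<n. must_rise n w k \<and> must_stay w k"
  proof
    assume "\<not> no_double_ascent w"
    then obtain i where i: "Suc (Suc i) < length w" "w ! i \<le> w ! Suc i" "w ! Suc i \<le> w ! Suc (Suc i)"
      unfolding no_double_ascent_def by blast
    have "i \<noteq> 0" using w01 i by (cases i) auto
    thus ?thesis using i len unfolding must_rise_def must_stay_def
      by (intro exI[of _ i]) (auto simp: numeral_2_eq_2)
  next
    assume a: "w ! (n - 1) \<le> w ! n"
    have "n \<noteq> 1" using a w01 by auto
    thus ?thesis using a n1 unfolding must_rise_def must_stay_def
      by (intro exI[of _ "n - 1"]) auto
  qed
qed

text \<open>The ascents of \<open>w\<close> at positions \<open>k \<ge> 1\<close> are the steps forced empty; shifted down by
  one, together with the last step, they are the steps forced to be letters.\<close>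
lemma card_forced_steps:
  fixes w :: "'l::order list"
  assumes len: "length w = Suc n" and n1: "n \<ge> 1" and w01: "\<not> w ! 0 \<le> w ! 1"
  shows "card {k\<in>{..<n}. must_rise n w k} = Suc (asc w)"
    and "card {k\<in>{..<n}. must_stay w k} = asc w"
proof -
  define AS where "AS = {i. Suc i < length w \<and> w ! i \<le> w ! Suc i}"
  have "0 \<notin> AS" using w01 unfolding AS_def by auto
  hence stay: "{k\<in>{..<n}. must_stay w k} = AS"
    using len unfolding AS_def must_stay_def by (auto simp: Suc_le_eq) (metis gr0I One_nat_def)
  define B where "B = {k. k + 2 \<le> n \<and> w ! (k+1) \<le> w ! (k+2)}"
  have AS_B: "AS = Suc ` B"
  proof (intro set_eqI iffI)
    fix i assume i: "i \<in> AS"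
    then obtain k where "i = Suc k" using \<open>0 \<notin> AS\<close> not0_implies_Suc by metis
    thus "i \<in> Suc ` B" using i len unfolding AS_def B_def by auto
  qed (use len in \<open>auto simp: AS_def B_def\<close>)
  have rise: "{k\<in>{..<n}. must_rise n w k} = insert (n - 1) B"
    unfolding B_def must_rise_def using n1 by auto
  have "finite B" by (rule finite_subset[of _ "{..n}"]) (auto simp: B_def)
  moreover have "n - 1 \<notin> B" unfolding B_def using n1 by auto
  ultimately
  show "card {k\<in>{..<n}. must_rise n w k} = Suc (asc w)"
    unfolding rise asc_def AS_def[symmetric] AS_B by (simp add: card_image)
  show "card {k\<in>{..<n}. must_stay w k} = asc w" unfolding stay asc_def AS_def ..
qed

lemma card_forced_steps_union:
  fixes w :: "'l::order list"
  assumes len: "length w = Suc n" and n1: "n \<ge> 1" and w01: "\<not> w ! 0 \<le> w ! 1"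
    and ok: "no_double_ascent w \<and> \<not> w ! (n - 1) \<le> w ! n"
  shows "card ({k\<in>{..<n}. must_rise n w k} \<union> {k\<in>{..<n}. must_stay w k}) = Suc (2 * asc w)"
proof -
  have "\<not> (\<exists>k<n. must_rise n w k \<and> must_stay w k)" using ok forced_conflict_iff[OF len n1 w01] by blast
  hence "{k\<in>{..<n}. must_rise n w k} \<inter> {k\<in>{..<n}. must_stay w k} = {}" by auto
  thus ?thesis using card_forced_steps[OF len n1 w01] by (subst card_Un_disjoint) auto
qed

text \<open>In particular the exponent \<open>n - 1 - 2 asc w\<close> of the theorem is a natural number.\<close>
lemma asc_bound:
  fixes w :: "'l::order list"
  assumes "length w = Suc n" "n \<ge> 1" "\<not> w ! 0 \<le> w ! 1"
    and "no_double_ascent w \<and> \<not> w ! (n - 1) \<le> w ! n"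
  shows "Suc (2 * asc w) \<le> n"
  using card_mono[of "{..<n}" "{k\<in>{..<n}. must_rise n w k} \<union> {k\<in>{..<n}. must_stay w k}"]
    card_forced_steps_union[OF assms] by auto

lemma card_admissible_steps:
  fixes w :: "'l::order list"
  assumes len: "length w = Suc n" and n1: "n \<ge> 1" and w01: "\<not> w ! 0 \<le> w ! 1"
  shows "card (admissible_steps t n w) =
           (if no_double_ascent w \<and> \<not> w ! (n - 1) \<le> w ! n
            then t ^ Suc (asc w) * Suc t ^ (n - Suc (2 * asc w)) else 0)"
proof -
  have card_prod: "card (admissible_steps t n w) = (\<Prod>k<n. card (allowed_steps t n w k))"
    unfolding admissible_steps_def
    by (rule card_lists_componentwise) (auto simp: allowed_steps_def step_choices_def)
  show ?thesis
  proof (cases "no_double_ascent w \<and> \<not> w ! (n - 1) \<le> w ! n")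
    case True
    define MR where "MR = {k\<in>{..<n}. must_rise n w k}"
    define MS where "MS = {k\<in>{..<n}. must_stay w k}"
    define R where "R = {..<n} - (MR \<union> MS)"
    have nc: "\<forall>k<n. \<not> (must_rise n w k \<and> must_stay w k)"
      using True forced_conflict_iff[OF assms] by blast
    have cR: "card R = n - Suc (2 * asc w)" unfolding R_def
      using card_forced_steps_union[OF assms True] by (subst card_Diff_subset) (auto simp: MR_def MS_def)
    have "(\<Prod>k<n. card (allowed_steps t n w k))
        = (\<Prod>k<n. if k \<in> MR then t else if k \<in> MS then 1 else Suc t)"
      using nc by (intro prod.cong) (auto simp: card_allowed_steps MR_def MS_def)
    also have "\<dots> = (\<Prod>k\<in>MR. t) * (\<Prod>k\<in>R. Suc t)"
    proof -
      have "{..<n} \<inter> {k. k \<in> MR} = MR" "{..<n} \<inter> - {k. k \<in> MR} \<inter> - {k. k \<in> MS} = R"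
        unfolding R_def MR_def by auto
      thus ?thesis by (simp add: prod.If_cases)
    qed
    also have "\<dots> = t ^ Suc (asc w) * Suc t ^ (n - Suc (2 * asc w))"
      using card_forced_steps[OF assms] cR unfolding MR_def by simp
    finally show ?thesis using True card_prod by simp
  next
    case False
    then obtain k where "k < n" "must_rise n w k" "must_stay w k"
      using forced_conflict_iff[OF assms] by blast
    hence "card (admissible_steps t n w) = 0"
      unfolding card_prod by (intro prod_zero) (auto simp: card_allowed_steps)
    thus ?thesis using False by auto
  qed
qed

text \<open>The label pattern of a Rees chain: the label word \<open>w\<close> of the flag paired with bits \<open>b\<^sub>j\<close>
  (\<open>b\<^sub>0\<close> false, \<open>b\<^sub>j\<close> saying that step \<open>j - 1\<close> is a letter), followed by a top label
  \<open>(top_label, False)\<close> dominating \<open>w\<^sub>n\<close>.\<close>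
lemma ascent_free_lifted_word:
  fixes w :: "'l::order list"
  assumes len: "length w = Suc n" and n1: "n \<ge> 1" and top_label: "w ! n \<le> top_label"
  shows "ascent_free (map (\<lambda>j. (w ! j, j \<noteq> 0 \<and> s ! (j - 1) \<noteq> None)) [0..<Suc n] @ [(top_label, False)])
     \<longleftrightarrow> \<not> w ! 0 \<le> w ! 1 \<and>
         (\<forall>k<n. (must_rise n w k \<longrightarrow> s ! k \<noteq> None) \<and> (must_stay w k \<longrightarrow> s ! k = None))"
    (is "ascent_free ?L \<longleftrightarrow> _")
proof -
  define b where "b j \<longleftrightarrow> j \<noteq> 0 \<and> s ! (j - 1) \<noteq> None" for j
  define L where "L = ?L"
  have Lj: "L ! j = (w ! j, b j)" if "j \<le> n" for j
    using that unfolding L_def b_def by (simp add: nth_append del: upt_Suc)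
  have Ln: "L ! Suc n = (top_label, False)" unfolding L_def by (simp add: nth_append del: upt_Suc)
  have len_L: "length L = n + 2" unfolding L_def by simp
  have step_j: "L ! j \<le> L ! Suc j \<longleftrightarrow> w ! j \<le> w ! Suc j \<and> (b j \<longrightarrow> b (Suc j))" if "j < n" for j
    using Lj[of j] Lj[of "Suc j"] that by simp
  have step_n: "L ! n \<le> L ! Suc n \<longleftrightarrow> \<not> b n" using Lj[of n] Ln top_label by simp
  have "ascent_free ?L \<longleftrightarrow> (\<forall>j<Suc n. \<not> L ! j \<le> L ! Suc j)"
    unfolding ascent_free_def L_def[symmetric] len_L by simp
  also have "\<dots> \<longleftrightarrow> b n \<and> (\<forall>j<n. \<not> (w ! j \<le> w ! Suc j \<and> (b j \<longrightarrow> b (Suc j))))"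
    unfolding All_less_Suc using step_j step_n by auto
  also have "\<dots> \<longleftrightarrow> \<not> w ! 0 \<le> w ! 1 \<and>
         (\<forall>k<n. (must_rise n w k \<longrightarrow> s ! k \<noteq> None) \<and> (must_stay w k \<longrightarrow> s ! k = None))"
  proof
    assume A: "b n \<and> (\<forall>j<n. \<not> (w ! j \<le> w ! Suc j \<and> (b j \<longrightarrow> b (Suc j))))"
    have "must_rise n w k \<longrightarrow> s ! k \<noteq> None" if "k < n" for k
      using A[THEN conjunct2, rule_format, of "Suc k"] A that n1
      unfolding must_rise_def b_def by (auto simp: numeral_2_eq_2)
    moreover have "must_stay w k \<longrightarrow> s ! k = None" if "k < n" for k
      using A[THEN conjunct2, rule_format, of k] that unfolding must_stay_def b_def by auto
    moreover have "\<not> w ! 0 \<le> w ! 1" using A[THEN conjunct2, rule_format, of 0] n1 unfolding b_def by auto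
    ultimately show "\<not> w ! 0 \<le> w ! 1 \<and>
         (\<forall>k<n. (must_rise n w k \<longrightarrow> s ! k \<noteq> None) \<and> (must_stay w k \<longrightarrow> s ! k = None))" by blast
  next
    assume B: "\<not> w ! 0 \<le> w ! 1 \<and>
         (\<forall>k<n. (must_rise n w k \<longrightarrow> s ! k \<noteq> None) \<and> (must_stay w k \<longrightarrow> s ! k = None))"
    have "b n" using B n1 unfolding must_rise_def b_def by auto
    moreover have "\<not> (w ! j \<le> w ! Suc j \<and> (b j \<longrightarrow> b (Suc j)))" if "j < n" for j
    proof (cases j)
      case (Suc i)
      thus ?thesis using B that unfolding must_rise_def must_stay_def b_def
        by (auto simp: numeral_2_eq_2 dest!: spec[of _ i] spec[of _ j])
    qed (use B in \<open>simp add: b_def\<close>)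
    ultimately show "b n \<and> (\<forall>j<n. \<not> (w ! j \<le> w ! Suc j \<and> (b j \<longrightarrow> b (Suc j))))" by blast
  qed
  finally show ?thesis .
qed

section \<open>Maximal chains of the Rees product\<close>

definition step_word :: "nat option \<Rightarrow> nat list" where
  "step_word z = (case z of None \<Rightarrow> [] | Some a \<Rightarrow> [a])"

definition T_word :: "nat option list \<Rightarrow> nat \<Rightarrow> nat list" where
  "T_word s i = concat (map step_word (take i s))"

definition step_seqs :: "nat \<Rightarrow> nat \<Rightarrow> nat option list set" where
  "step_seqs t n = {s. length s = n \<and> (\<forall>k<n. s ! k \<in> step_choices t)}"

definition rees_chain :: "'a list \<Rightarrow> nat option list \<Rightarrow> ('a \<times> nat list) hat list" where
  "rees_chain xs s = Bot # map (\<lambda>i. Elm (xs ! i, T_word s i)) [0..<length xs] @ [Top]"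

lemma step_word_inj: "step_word a = step_word b \<Longrightarrow> a = b"
  unfolding step_word_def by (cases a; cases b) auto

lemma strict_prefix_step_word: "strict_prefix q (q @ step_word z) \<longleftrightarrow> z \<noteq> None"
  unfolding step_word_def by (cases z) (auto simp: strict_prefix_def)

lemma T_word_0 [simp]: "T_word s 0 = []"
  unfolding T_word_def by simp

lemma T_word_Suc: "i < length s \<Longrightarrow> T_word s (Suc i) = T_word s i @ step_word (s ! i)"
  unfolding T_word_def by (simp add: take_Suc_conv_app_nth)

lemma length_T_word: "length (T_word s i) \<le> i"
proof -
  have "length (concat (map step_word l)) \<le> length l" for l
    by (induction l) (auto simp: step_word_def split: option.splits)
  from this[of "take i s"] show ?thesis unfolding T_word_def by simp
qed

lemma set_T_word: assumes "s \<in> step_seqs t n" shows "set (T_word s i) \<subseteq> {1..t}"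
proof -
  have "\<forall>z\<in>set (take i s). z \<in> step_choices t"
    using assms unfolding step_seqs_def by (auto simp: in_set_conv_nth)
  thus ?thesis unfolding T_word_def step_choices_def step_word_def by (auto split: option.splits)
qed

lemma admissible_steps_subset: "admissible_steps t n w \<subseteq> step_seqs t n"
  unfolding admissible_steps_def step_seqs_def allowed_steps_def by auto

lemma finite_step_seqs: "finite (step_seqs t n)"
  by (rule finite_subset[OF _ finite_lists_length_eq[of "step_choices t" n]])
     (auto simp: step_seqs_def step_choices_def in_set_conv_nth)

lemma length_rees_chain: "length (rees_chain xs s) = length xs + 2"
  unfolding rees_chain_def by simp

lemma rees_chain_nth:
  "rees_chain xs s ! 0 = Bot"
  "i < length xs \<Longrightarrow> rees_chain xs s ! Suc i = Elm (xs ! i, T_word s i)"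
  "rees_chain xs s ! Suc (length xs) = Top"
  unfolding rees_chain_def by (simp_all add: nth_append)

lemma rees_chain_inj:
  assumes len: "length xs = Suc n" "length xs' = Suc n" and ss: "s \<in> step_seqs t n" "s' \<in> step_seqs t n"
    and eq: "rees_chain xs s = rees_chain xs' s'"
  shows "xs = xs' \<and> s = s'"
proof
  have pts: "xs ! i = xs' ! i \<and> T_word s i = T_word s' i" if "i \<le> n" for i
  proof -
    have "i < length xs" "i < length xs'" using that len by auto
    thus ?thesis using arg_cong[OF eq, of "\<lambda>c. c ! Suc i"] by (simp add: rees_chain_nth)
  qed
  thus "xs = xs'" using len by (simp add: nth_equalityI)
  have ls: "length s = n" "length s' = n" using ss unfolding step_seqs_def by auto
  show "s = s'"
  proof (rule nth_equalityI)
    fix k assume k: "k < length s"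
    hence "T_word s k @ step_word (s ! k) = T_word s' k @ step_word (s' ! k)"
      using pts[of "Suc k"] ls by (simp add: T_word_Suc)
    thus "s ! k = s' ! k" using pts[of k] k ls step_word_inj by simp
  qed (use ls in simp)
qed

lemma maxchain_hat_points:
  assumes mc: "maxchain (hat_carrier X) (hat_le le) c"
  shows "c ! 0 = Bot" and "last c = Top"
    and "\<And>i. 0 < i \<Longrightarrow> Suc i < length c \<Longrightarrow> \<exists>p\<in>X. c ! i = Elm p"
proof -
  have cne: "c \<noteq> []" and cov: "\<And>i. Suc i < length c \<Longrightarrow> cover (hat_carrier X) (hat_le le) (c ! i) (c ! Suc i)"
    using mc unfolding maxchain_def by auto
  have "Bot = hd c" using mc unfolding maxchain_def hat_carrier_def by auto
  thus "c ! 0 = Bot" using cne by (simp add: hd_conv_nth)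
  have "hat_le le (last c) Top" by (cases "last c") auto
  thus "last c = Top" using mc unfolding maxchain_def hat_carrier_def by auto
  fix i assume i: "0 < i" "Suc i < length c"
  have below: "cover (hat_carrier X) (hat_le le) (c ! (i - 1)) (c ! i)" using cov[of "i - 1"] i by simp
  have above: "cover (hat_carrier X) (hat_le le) (c ! i) (c ! Suc i)" using cov i by simp
  have "c ! i \<noteq> Bot" using below unfolding cover_def by (auto elim: hat_le.elims)
  moreover have "c ! i \<noteq> Top" using above unfolding cover_def by (auto elim: hat_le.elims)
  moreover have "c ! i \<in> hat_carrier X" using above unfolding cover_def by auto
  ultimately show "\<exists>p\<in>X. c ! i = Elm p" unfolding hat_carrier_def by auto
qed

context semipure_top
begin

abbreviation "RC t \<equiv> rees_carrier P t n"
abbreviation "H t \<equiv> hat_carrier (RC t)"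
abbreviation "hle \<equiv> hat_le (rees_le P)"

lemma cover_hat_Bot:
  assumes "(x, []) \<in> RC t" "\<forall>z\<in>P. z \<le> x \<longrightarrow> z = x"
  shows "cover (H t) hle Bot (Elm (x, []))"
  using assms unfolding cover_def hat_carrier_def rees_carrier_def by auto

lemma cover_hat_Elm:
  assumes xy: "cover P (\<le>) x y" and ql: "prefix q l" "length l \<le> Suc (length q)"
    and mem: "(x, q) \<in> RC t" "(y, l) \<in> RC t"
  shows "cover (H t) hle (Elm (x, q)) (Elm (y, l))"
proof -
  have ry: "rk y = Suc (rk x)" using rank_cover[OF xy] .
  have no_between: "False" if z: "z \<in> H t" "hle (Elm (x, q)) z" "hle z (Elm (y, l))"
    "z \<noteq> Elm (x, q)" "z \<noteq> Elm (y, l)" for z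
  proof -
    obtain u k where "z = Elm (u, k)" "(u, k) \<in> RC t"
      using z(1-3) unfolding hat_carrier_def by (auto elim: hat_le.elims)
    hence that: "(u, k) \<in> RC t" "rees_le P (x, q) (u, k)" "rees_le P (u, k) (y, l)"
      "(u, k) \<noteq> (x, q)" "(u, k) \<noteq> (y, l)" using z by auto
    have "u \<in> P" using that(1) unfolding rees_carrier_def by auto
    hence "u = x \<or> u = y" using xy that(2,3) unfolding cover_def by auto
    thus False
    proof
      assume "u = x"
      hence "prefix q k" "length k \<le> length q" using that(2) by auto
      thus False using prefix_length_eq that(4) \<open>u = x\<close> by blast
    next
      assume "u = y"
      hence "prefix k l" "length l \<le> length k" using that(3) by auto
      thus False using prefix_length_eq that(5) \<open>u = y\<close> by blast
    qed
  qed
  show ?thesis unfolding cover_def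
  proof (intro conjI)
    show "Elm (x, q) \<in> H t" "Elm (y, l) \<in> H t" using mem unfolding hat_carrier_def by auto
    show "hle (Elm (x, q)) (Elm (y, l))" using xy ql ry unfolding cover_def by auto
    show "Elm (x, q) \<noteq> Elm (y, l)" using xy unfolding cover_def by auto
    show "\<not> (\<exists>z\<in>H t. hle (Elm (x, q)) z \<and> hle z (Elm (y, l)) \<and> z \<noteq> Elm (x, q) \<and> z \<noteq> Elm (y, l))"
    proof
      assume "\<exists>z\<in>H t. hle (Elm (x, q)) z \<and> hle z (Elm (y, l)) \<and> z \<noteq> Elm (x, q) \<and> z \<noteq> Elm (y, l)"
      then obtain z where "z \<in> H t" "hle (Elm (x, q)) z" "hle z (Elm (y, l))" "z \<noteq> Elm (x, q)" "z \<noteq> Elm (y, l)"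
        by blast
      thus False by (rule no_between)
    qed
  qed
qed

lemma cover_hat_Top:
  assumes "(m, q) \<in> RC t" shows "cover (H t) hle (Elm (m, q)) Top"
proof -
  have "(u, k) = (m, q)" if "(u, k) \<in> RC t" "rees_le P (m, q) (u, k)" for u k
  proof -
    have "u = m" using that m_max unfolding rees_carrier_def by (auto intro: order.antisym)
    thus ?thesis using that(2) prefix_length_eq by auto
  qed
  thus ?thesis using assms unfolding cover_def hat_carrier_def by auto
qed

lemma cover_hat_Elm_D:
  assumes "cover (H t) hle (Elm (x, q)) (Elm (y, l))"
  shows "x < y" "prefix q l" "length l + rk x \<le> length q + rk y"
proof -
  have le: "rees_le P (x, q) (y, l)" and ne: "(x, q) \<noteq> (y, l)"
    using assms unfolding cover_def by auto
  thus "prefix q l" "length l + rk x \<le> length q + rk y" by auto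
  have "x \<noteq> y"
  proof
    assume "x = y"
    hence "prefix q l" "length l \<le> length q" using le by auto
    thus False using ne prefix_length_eq \<open>x = y\<close> by blast
  qed
  thus "x < y" using le by auto
qed

lemma rees_chain_points:
  assumes fl: "flag P n xs" and s: "s \<in> step_seqs t n" and i: "i \<le> n"
  shows "(xs ! i, T_word s i) \<in> RC t"
proof -
  have "xs ! i \<in> P" using fl i unfolding flag_def by (auto simp: subset_iff)
  moreover have "length (T_word s i) \<le> rk (xs ! i)" using length_T_word flag_rank[OF fl i] by simp
  moreover have "length (T_word s i) \<le> n" using length_T_word[of s i] i by simp
  ultimately show ?thesis using set_T_word[OF s] by (simp add: rees_carrier_def T_carrier_def)
qed

lemma maxchain_rees_chain:
  assumes fl: "flag P n xs" and s: "s \<in> step_seqs t n"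
  shows "maxchain (H t) hle (rees_chain xs s)"
proof -
  have len: "length xs = Suc n" and ls: "length s = n" using fl s unfolding flag_def step_seqs_def by auto
  let ?c = "rees_chain xs s"
  show ?thesis unfolding maxchain_def
  proof (intro conjI ballI allI impI)
    show "?c \<noteq> []" unfolding rees_chain_def by simp
    have "Elm (xs ! i, T_word s i) \<in> H t" if "i < length xs" for i
      using rees_chain_points[OF fl s, of i] that len unfolding hat_carrier_def by simp
    moreover have "set ?c = insert Bot (insert Top ((\<lambda>i. Elm (xs ! i, T_word s i)) ` {0..<length xs}))"
      unfolding rees_chain_def by auto
    ultimately show "set ?c \<subseteq> H t" unfolding hat_carrier_def by auto
  next
    fix z assume "hle z (hd ?c)" thus "z = hd ?c" unfolding rees_chain_def by (cases z) auto
  next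
    fix z assume "hle (last ?c) z" thus "z = last ?c" unfolding rees_chain_def by (cases z) auto
  next
    fix i assume i: "Suc i < length ?c"
    hence "i = 0 \<or> (\<exists>j<n. i = Suc j) \<or> i = Suc n" using len length_rees_chain[of xs s]
      by (cases i) auto
    thus "cover (H t) hle (?c ! i) (?c ! Suc i)"
    proof (elim disjE exE conjE)
      assume "i = 0"
      have "cover (H t) hle Bot (Elm (xs ! 0, T_word s 0))"
        using cover_hat_Bot rees_chain_points[OF fl s, of 0] fl unfolding flag_def by simp
      moreover have "?c ! i = Bot" "?c ! Suc i = Elm (xs ! 0, T_word s 0)"
        using \<open>i = 0\<close> len rees_chain_nth(1)[of xs s] rees_chain_nth(2)[of 0 xs s] by simp_all
      ultimately show ?thesis by simp
    next
      fix j assume j: "j < n" "i = Suc j"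
      have cv: "cover P (\<le>) (xs ! j) (xs ! Suc j)" using fl j unfolding flag_def by simp
      have "T_word s (Suc j) = T_word s j @ step_word (s ! j)" using T_word_Suc j ls by simp
      moreover have "length (step_word (s ! j)) \<le> 1" unfolding step_word_def by (auto split: option.splits)
      ultimately have pre: "prefix (T_word s j) (T_word s (Suc j))"
        "length (T_word s (Suc j)) \<le> Suc (length (T_word s j))" by simp_all
      have "(xs ! j, T_word s j) \<in> RC t" "(xs ! Suc j, T_word s (Suc j)) \<in> RC t"
        using rees_chain_points[OF fl s] j by simp_all
      hence "cover (H t) hle (Elm (xs ! j, T_word s j)) (Elm (xs ! Suc j, T_word s (Suc j)))"
        by (rule cover_hat_Elm[OF cv pre])
      moreover have "?c ! i = Elm (xs ! j, T_word s j)" "?c ! Suc i = Elm (xs ! Suc j, T_word s (Suc j))"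
        using j len rees_chain_nth(2)[of j xs s] rees_chain_nth(2)[of "Suc j" xs s] by simp_all
      ultimately show ?thesis by simp
    next
      assume "i = Suc n"
      have "cover (H t) hle (Elm (xs ! n, T_word s n)) Top"
        using cover_hat_Top rees_chain_points[OF fl s, of n] flag_last[OF fl] by simp
      moreover have "?c ! i = Elm (xs ! n, T_word s n)" "?c ! Suc i = Top"
        using \<open>i = Suc n\<close> len rees_chain_nth(3)[of xs s] rees_chain_nth(2)[of n xs s] by simp_all
      ultimately show ?thesis by simp
    qed
  qed
qed

lemma rees_maxchain_points:
  assumes mc: "maxchain (H t) hle c" and lc: "length c = n + 3"
  obtains x q where
    "\<And>j. j \<le> n \<Longrightarrow> c ! Suc j = Elm (x j, q j) \<and> (x j, q j) \<in> RC t \<and> rk (x j) = j"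
    "\<And>j. j < n \<Longrightarrow> x j < x (Suc j) \<and> prefix (q j) (q (Suc j)) \<and> length (q (Suc j)) \<le> Suc (length (q j))"
proof -
  define x where "x j = fst (case c ! Suc j of Elm p \<Rightarrow> p)" for j
  define q where "q j = snd (case c ! Suc j of Elm p \<Rightarrow> p)" for j
  have pt: "c ! Suc j = Elm (x j, q j) \<and> (x j, q j) \<in> RC t" if "j \<le> n" for j
    using maxchain_hat_points(3)[OF mc, of "Suc j"] that lc unfolding x_def q_def by auto
  have xP: "x j \<in> P" if "j \<le> n" for j using pt[OF that] unfolding rees_carrier_def by auto
  have cov: "cover (H t) hle (Elm (x j, q j)) (Elm (x (Suc j), q (Suc j)))" if "j < n" for j
  proof -
    have "Suc (Suc j) < length c" using that lc by simp
    hence "cover (H t) hle (c ! Suc j) (c ! Suc (Suc j))" using mc unfolding maxchain_def by blast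
    thus ?thesis using pt[of j] pt[of "Suc j"] that by simp
  qed
  have "\<forall>j\<le>n. rk (x j) = j"
  proof (rule strict_mono_bounded_id)
    show "\<forall>j<n. rk (x j) < rk (x (Suc j))"
    proof (intro allI impI)
      fix j assume "j < n"
      thus "rk (x j) < rk (x (Suc j))"
        using rank_strict_mono[OF xP[of j] xP[of "Suc j"]] cover_hat_Elm_D(1)[OF cov] by simp
    qed
    show "\<forall>j\<le>n. rk (x j) \<le> n" using rank_le xP by simp
  qed
  moreover have "length (q (Suc j)) \<le> Suc (length (q j))" if "j < n" for j
    using cover_hat_Elm_D(3)[OF cov[OF that]] \<open>\<forall>j\<le>n. rk (x j) = j\<close> that by simp
  ultimately show ?thesis using pt cover_hat_Elm_D(1,2)[OF cov] by (intro that[of x q]) auto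
qed

lemma rees_maxchain_decomp:
  assumes mc: "maxchain (H t) hle c" and lc: "length c = n + 3"
  shows "\<exists>xs s. flag P n xs \<and> s \<in> step_seqs t n \<and> c = rees_chain xs s"
proof -
  obtain x q where pt: "\<And>j. j \<le> n \<Longrightarrow> c ! Suc j = Elm (x j, q j) \<and> (x j, q j) \<in> RC t \<and> rk (x j) = j"
    and up: "\<And>j. j < n \<Longrightarrow> x j < x (Suc j) \<and> prefix (q j) (q (Suc j)) \<and> length (q (Suc j)) \<le> Suc (length (q j))"
    using rees_maxchain_points[OF assms] by blast
  have xP: "x j \<in> P" and qT: "set (q j) \<subseteq> {1..t}" "length (q j) \<le> j" if "j \<le> n" for j
    using pt[OF that] unfolding rees_carrier_def T_carrier_def by auto
  define xs where "xs = map x [0..<Suc n]"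
  define s where "s = map (\<lambda>j. if q (Suc j) = q j then None else Some (last (q (Suc j)))) [0..<n]"
  have xs_nth: "xs ! j = x j" if "j \<le> n" for j
    using that unfolding xs_def by (simp del: upt_Suc add: nth_map_upt)
  have fl: "flag P n xs" unfolding flag_def
  proof (intro conjI)
    show "length xs = Suc n" "set xs \<subseteq> P" unfolding xs_def using xP by auto
    have x0: "xs ! 0 = x 0" "rk (x 0) = 0" using xs_nth[of 0] pt[of 0] by auto
    show "\<forall>z\<in>P. z \<le> xs ! 0 \<longrightarrow> z = xs ! 0"
    proof (intro ballI impI)
      fix z assume z: "z \<in> P" "z \<le> xs ! 0"
      show "z = xs ! 0"
      proof (rule ccontr)
        assume "z \<noteq> xs ! 0"
        hence "z < x 0" using z(2) x0(1) by (simp add: order.order_iff_strict)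
        hence "rk z < rk (x 0)" using rank_strict_mono z(1) xP[of 0] by simp
        thus False using x0 by simp
      qed
    qed
    show "\<forall>i<n. cover P (\<le>) (xs ! i) (xs ! Suc i)"
      using cover_of_rank_step xP up pt xs_nth by auto
  qed
  have step: "q (Suc j) = q j @ step_word (s ! j) \<and> s ! j \<in> step_choices t" if "j < n" for j
  proof -
    have sj: "s ! j = (if q (Suc j) = q j then None else Some (last (q (Suc j))))"
      using that unfolding s_def by simp
    have "q (Suc j) = q j \<or> (\<exists>a. q (Suc j) = q j @ [a])" using up[OF that] prefix_length_Suc by blast
    thus ?thesis
    proof
      assume "q (Suc j) = q j" thus ?thesis using sj by (simp add: step_word_def step_choices_def)
    next
      assume "\<exists>a. q (Suc j) = q j @ [a]"
      then obtain a where a: "q (Suc j) = q j @ [a]" by blast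
      have "a \<in> {1..t}" using qT(1)[of "Suc j"] that a by auto
      thus ?thesis using sj a by (simp add: step_word_def step_choices_def)
    qed
  qed
  have ls: "length s = n" unfolding s_def by simp
  have T_word_q: "T_word s j = q j" if "j \<le> n" for j
    using that
  proof (induction j)
    case 0 thus ?case using qT(2)[of 0] by simp
  next
    case (Suc j) thus ?case using T_word_Suc[of j s] step[of j] ls by simp
  qed
  have ss: "s \<in> step_seqs t n" unfolding step_seqs_def using step ls by auto
  have "c = rees_chain xs s"
  proof (rule nth_equalityI)
    have len_xs: "length xs = Suc n" using fl unfolding flag_def by simp
    show "length c = length (rees_chain xs s)" using lc len_xs by (simp add: length_rees_chain)
    fix i assume "i < length c"
    hence "i = 0 \<or> (\<exists>j\<le>n. i = Suc j) \<or> i = Suc (Suc n)" using lc by (cases i) auto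
    thus "c ! i = rees_chain xs s ! i"
    proof (elim disjE exE conjE)
      assume "i = 0" thus ?thesis using maxchain_hat_points(1)[OF mc] by (simp add: rees_chain_nth)
    next
      fix j assume "j \<le> n" "i = Suc j"
      thus ?thesis using pt xs_nth T_word_q rees_chain_nth(2)[of j xs s] len_xs by simp
    next
      assume "i = Suc (Suc n)"
      moreover have "c ! Suc (Suc n) = Top"
      proof -
        have "c \<noteq> []" using lc by auto
        thus ?thesis using maxchain_hat_points(2)[OF mc] lc by (simp add: last_conv_nth)
      qed
      ultimately show ?thesis using rees_chain_nth(3)[of xs s] len_xs by simp
    qed
  qed
  thus ?thesis using fl ss by blast
qed

end

section \<open>Ascent-free maximal chains\<close>

context semipure_top
begin

lemma maxchain_interval_to_Top:
  assumes am: "cover P (\<le>) a m"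
    and mc: "maxchain (interval (hat_carrier P) (hat_le (\<le>)) (Elm a) Top) (hat_le (\<le>)) c"
  shows "c = [Elm a, Elm m, Top]"
proof -
  let ?I = "interval (hat_carrier P) (hat_le (\<le>)) (Elm a) Top"
  have a: "a \<in> P" "a < m" using am unfolding cover_def by auto
  have I: "?I = {Elm a, Elm m, Top}"
  proof (intro set_eqI iffI)
    fix z assume "z \<in> ?I"
    thus "z \<in> {Elm a, Elm m, Top}"
      using am m_max unfolding interval_def hat_carrier_def cover_def by (cases z) auto
  qed (use a m_in_P in \<open>auto simp: interval_def hat_carrier_def\<close>)
  have succ: "(u = Elm a \<and> v = Elm m) \<or> (u = Elm m \<and> v = Top)"
    if "cover ?I (hat_le (\<le>)) u v" for u v
    using that a unfolding cover_def I by auto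
  have cne: "c \<noteq> []" and set_c: "set c \<subseteq> ?I"
    and cov: "\<And>i. Suc i < length c \<Longrightarrow> cover ?I (hat_le (\<le>)) (c ! i) (c ! Suc i)"
    and hd_min: "\<forall>z\<in>?I. hat_le (\<le>) z (hd c) \<longrightarrow> z = hd c"
    and last_max: "\<forall>z\<in>?I. hat_le (\<le>) (last c) z \<longrightarrow> z = last c"
    using mc unfolding maxchain_def by auto
  have "hd c \<in> ?I" using cne set_c by auto
  hence "hat_le (\<le>) (Elm a) (hd c)" unfolding I using a by auto
  hence "hd c = Elm a" using hd_min unfolding I by auto
  hence c0: "c ! 0 = Elm a" using cne by (simp add: hd_conv_nth)
  have "hat_le (\<le>) (last c) Top" by (cases "last c") auto
  hence c_last: "last c = Top" using last_max unfolding I by auto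
  have l2: "2 \<le> length c"
  proof (rule ccontr)
    assume "\<not> 2 \<le> length c"
    moreover have "0 < length c" using cne by simp
    ultimately have "length c = 1" by linarith
    thus False using c0 c_last cne by (simp add: last_conv_nth)
  qed
  have c1: "c ! 1 = Elm m" using succ[OF cov[of 0]] l2 c0 a by auto
  have l3: "3 \<le> length c"
  proof (rule ccontr)
    assume "\<not> 3 \<le> length c"
    hence "length c = 2" using l2 by simp
    thus False using c1 c_last cne by (simp add: last_conv_nth)
  qed
  have c2: "c ! 2 = Top" using succ[OF cov[of 1]] l3 c1 a by (auto simp: numeral_2_eq_2)
  have "length c = 3"
  proof (rule ccontr)
    assume "length c \<noteq> 3"
    hence "Suc 2 < length c" using l3 by simp
    thus False using succ[OF cov[of 2]] c2 by auto
  qed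
  thus ?thesis using c0 c1 c2 by (intro nth_equalityI) (auto simp: less_Suc_eq numeral_3_eq_3 numeral_2_eq_2)
qed

lemma labels_rees_chain:
  assumes fl: "flag P n xs" and s: "s \<in> step_seqs t n"
  shows "labels (induced_lab lamP) (rees_chain xs s) =
    map (\<lambda>j. (labels lamP (Bot # map Elm xs) ! j, j \<noteq> 0 \<and> s ! (j - 1) \<noteq> None)) [0..<Suc n]
    @ [(lamP (Elm m) Top, False)]"
proof (rule nth_equalityI)
  have len: "length xs = Suc n" and ls: "length s = n" using fl s unfolding flag_def step_seqs_def by auto
  show "length (labels (induced_lab lamP) (rees_chain xs s)) =
    length (map (\<lambda>j. (labels lamP (Bot # map Elm xs) ! j, j \<noteq> 0 \<and> s ! (j - 1) \<noteq> None)) [0..<Suc n]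
    @ [(lamP (Elm m) Top, False)])"
    using len by (simp add: labels_length length_rees_chain)
  fix j assume "j < length (labels (induced_lab lamP) (rees_chain xs s))"
  hence j: "j < n + 2" using len by (simp add: labels_length length_rees_chain)
  have w: "labels lamP (Bot # map Elm xs) ! i = lamP ((Bot # map Elm xs) ! i) (Elm (xs ! i))"
    if "i \<le> n" for i using that len by (simp add: labels_nth)
  have lab: "labels (induced_lab lamP) (rees_chain xs s) ! j
      = induced_lab lamP (rees_chain xs s ! j) (rees_chain xs s ! Suc j)"
    using j len by (simp add: labels_nth length_rees_chain)
  consider "j = 0" | i where "j = Suc i" "i < n" | "j = Suc n"
    using j by (cases j) (auto simp: less_Suc_eq)
  thus "labels (induced_lab lamP) (rees_chain xs s) ! j =
    (map (\<lambda>j. (labels lamP (Bot # map Elm xs) ! j, j \<noteq> 0 \<and> s ! (j - 1) \<noteq> None)) [0..<Suc n]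
    @ [(lamP (Elm m) Top, False)]) ! j"
  proof cases
    case 1
    thus ?thesis using lab w[of 0] len by (simp add: rees_chain_nth nth_append del: upt_Suc)
  next
    case (2 i)
    have "T_word s (Suc i) = T_word s i @ step_word (s ! i)" using T_word_Suc 2 ls by simp
    thus ?thesis using lab w[of "Suc i"] 2 len
      by (simp add: rees_chain_nth nth_append strict_prefix_step_word del: upt_Suc)
  next
    case 3
    thus ?thesis using lab flag_last[OF fl] len rees_chain_nth(3)[of xs s]
      by (simp add: rees_chain_nth nth_append del: upt_Suc)
  qed
qed

end

locale EL_semipure_top = semipure_top P n m for P :: "'a::order set" and n m +
  fixes lamP :: "'a hat \<Rightarrow> 'a hat \<Rightarrow> 'l::order"
  assumes EL: "EL_labeling (hat_carrier P) (hat_le (\<le>)) lamP" and n_pos: "n \<ge> 1"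
begin

abbreviation flag_word :: "'a list \<Rightarrow> 'l list" where
  "flag_word xs \<equiv> labels lamP (Bot # map Elm xs)"

lemma length_flag_word: "flag P n xs \<Longrightarrow> length (flag_word xs) = Suc n"
  unfolding flag_def by (simp add: labels_length)

text \<open>The last letter of a flag word is dominated by the label of \<open>m \<lessdot> Top\<close>, because
  \<open>x\<^sub>n\<^sub>-\<^sub>1 \<lessdot> m \<lessdot> Top\<close> is the increasing chain of its interval.\<close>
lemma flag_word_last_le_top:
  assumes fl: "flag P n xs" shows "flag_word xs ! n \<le> lamP (Elm m) Top"
proof -
  define a where "a = xs ! (n - 1)"
  have len: "length xs = Suc n" using fl unfolding flag_def by simp
  have "n - 1 < n" using n_pos by simp
  hence "cover P (\<le>) (xs ! (n - 1)) (xs ! Suc (n - 1))" using fl unfolding flag_def by blast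
  hence am: "cover P (\<le>) a m" using flag_last[OF fl] n_pos unfolding a_def by simp
  hence "Elm a \<in> hat_carrier P" "Top \<in> hat_carrier P" unfolding cover_def hat_carrier_def by auto
  hence "\<exists>!c. maxchain (interval (hat_carrier P) (hat_le (\<le>)) (Elm a) Top) (hat_le (\<le>)) c
           \<and> weakly_increasing (labels lamP c)"
    using EL unfolding EL_labeling_def by simp
  then obtain c where c: "maxchain (interval (hat_carrier P) (hat_le (\<le>)) (Elm a) Top) (hat_le (\<le>)) c"
    "weakly_increasing (labels lamP c)" by blast
  have "labels lamP c = [lamP (Elm a) (Elm m), lamP (Elm m) Top]"
    unfolding maxchain_interval_to_Top[OF am c(1)] labels_def by (simp add: upt_rec)
  hence "lamP (Elm a) (Elm m) \<le> lamP (Elm m) Top"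
    using c(2)[unfolded weakly_increasing_def, rule_format, of 0] by simp
  moreover have "flag_word xs ! n = lamP (Elm a) (Elm m)"
    using len flag_last[OF fl] n_pos unfolding a_def by (simp add: labels_nth)
  ultimately show ?thesis by simp
qed

lemma ascent_free_rees_chain_iff:
  assumes fl: "flag P n xs" and s: "s \<in> step_seqs t n"
  shows "ascent_free (labels (induced_lab lamP) (rees_chain xs s)) \<longleftrightarrow>
     \<not> flag_word xs ! 0 \<le> flag_word xs ! 1 \<and> s \<in> admissible_steps t n (flag_word xs)"
  unfolding labels_rees_chain[OF fl s]
    ascent_free_lifted_word[OF length_flag_word[OF fl] n_pos flag_word_last_le_top[OF fl]]
  using s unfolding admissible_steps_def allowed_steps_def step_seqs_def by auto

lemma ascent_free_chains_eq:
  "{c. maxchain (H t) hle c \<and> length c - 1 = n + 2 \<and> ascent_free (labels (induced_lab lamP) c)}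
   = (\<Union>xs\<in>{xs. flag P n xs \<and> \<not> flag_word xs ! 0 \<le> flag_word xs ! 1}.
        rees_chain xs ` admissible_steps t n (flag_word xs))"
proof (intro set_eqI iffI)
  fix c assume "c \<in> {c. maxchain (H t) hle c \<and> length c - 1 = n + 2
                        \<and> ascent_free (labels (induced_lab lamP) c)}"
  hence c: "maxchain (H t) hle c" "length c = n + 3" "ascent_free (labels (induced_lab lamP) c)"
    by auto
  obtain xs s where xs: "flag P n xs" "s \<in> step_seqs t n" "c = rees_chain xs s"
    using rees_maxchain_decomp[OF c(1,2)] by blast
  thus "c \<in> (\<Union>xs\<in>{xs. flag P n xs \<and> \<not> flag_word xs ! 0 \<le> flag_word xs ! 1}.
        rees_chain xs ` admissible_steps t n (flag_word xs))"
    using ascent_free_rees_chain_iff[OF xs(1,2)] c(3) by auto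
next
  fix c assume "c \<in> (\<Union>xs\<in>{xs. flag P n xs \<and> \<not> flag_word xs ! 0 \<le> flag_word xs ! 1}.
        rees_chain xs ` admissible_steps t n (flag_word xs))"
  then obtain xs s where xs: "flag P n xs" "\<not> flag_word xs ! 0 \<le> flag_word xs ! 1"
    "s \<in> admissible_steps t n (flag_word xs)" "c = rees_chain xs s" by blast
  have s: "s \<in> step_seqs t n" using admissible_steps_subset xs(3) by blast
  have "length c = n + 3" using xs(1,4) unfolding flag_def by (simp add: length_rees_chain)
  thus "c \<in> {c. maxchain (H t) hle c \<and> length c - 1 = n + 2
                \<and> ascent_free (labels (induced_lab lamP) c)}"
    using maxchain_rees_chain[OF xs(1) s] ascent_free_rees_chain_iff[OF xs(1) s] xs by simp
qed

lemma card_ascent_free_chains: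
  "card {c. maxchain (H t) hle c \<and> length c - 1 = n + 2 \<and> ascent_free (labels (induced_lab lamP) c)}
   = (\<Sum>xs\<in>{xs. flag P n xs \<and> \<not> flag_word xs ! 0 \<le> flag_word xs ! 1}.
        card (admissible_steps t n (flag_word xs)))"
proof -
  let ?F = "{xs. flag P n xs \<and> \<not> flag_word xs ! 0 \<le> flag_word xs ! 1}"
  let ?A = "\<lambda>xs. admissible_steps t n (flag_word xs)"
  have len: "length xs = Suc n" if "xs \<in> ?F" for xs using that unfolding flag_def by simp
  have "card (\<Union>xs\<in>?F. rees_chain xs ` ?A xs) = (\<Sum>xs\<in>?F. card (rees_chain xs ` ?A xs))"
  proof (rule card_UN_disjoint)
    show "finite ?F" using finite_flags by (rule finite_subset[rotated]) auto
    show "\<forall>xs\<in>?F. finite (rees_chain xs ` ?A xs)"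
      using finite_subset[OF admissible_steps_subset finite_step_seqs] by blast
    show "\<forall>xs\<in>?F. \<forall>ys\<in>?F. xs \<noteq> ys \<longrightarrow> rees_chain xs ` ?A xs \<inter> rees_chain ys ` ?A ys = {}"
    proof (intro ballI impI)
      fix xs ys assume xs: "xs \<in> ?F" and ys: "ys \<in> ?F" and "xs \<noteq> ys"
      have "rees_chain xs s \<noteq> rees_chain ys s'" if "s \<in> ?A xs" "s' \<in> ?A ys" for s s'
        using rees_chain_inj[OF len[OF xs] len[OF ys]] admissible_steps_subset that \<open>xs \<noteq> ys\<close>
        by blast
      thus "rees_chain xs ` ?A xs \<inter> rees_chain ys ` ?A ys = {}" by blast
    qed
  qed
  also have "\<dots> = (\<Sum>xs\<in>?F. card (?A xs))"
  proof (rule sum.cong)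
    fix xs assume xs: "xs \<in> ?F"
    have "inj_on (rees_chain xs) (?A xs)"
    proof (rule inj_onI)
      fix s s' assume "s \<in> ?A xs" "s' \<in> ?A xs" "rees_chain xs s = rees_chain xs s'"
      thus "s = s'" using rees_chain_inj[OF len[OF xs] len[OF xs]] admissible_steps_subset by blast
    qed
    thus "card (rees_chain xs ` ?A xs) = card (?A xs)" by (rule card_image)
  qed simp
  finally show ?thesis unfolding ascent_free_chains_eq .
qed

lemma card_ascent_free_chains_by_word:
  "card {c. maxchain (H t) hle c \<and> length c - 1 = n + 2 \<and> ascent_free (labels (induced_lab lamP) c)}
   = (\<Sum>w \<in> {w \<in> NDA (n + 1). \<not> w ! 0 \<le> w ! 1 \<and> \<not> w ! (n - 1) \<le> w ! n \<and> chain_count P lamP w \<noteq> 0}.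
        chain_count P lamP w * (t ^ Suc (asc w) * Suc t ^ (n - Suc (2 * asc w))))"
  (is "_ = (\<Sum>w\<in>?S. chain_count P lamP w * ?f w)")
proof -
  define good where "good w \<longleftrightarrow> \<not> w ! 0 \<le> w ! 1 \<and> no_double_ascent w \<and> \<not> w ! (n - 1) \<le> w ! n"
    for w :: "'l list"
  define F where "F = {xs. flag P n xs \<and> good (flag_word xs)}"
  have finF: "finite F" using finite_flags by (rule finite_subset[rotated]) (auto simp: F_def)
  have cc: "chain_count P lamP w = card {xs. flag P n xs \<and> flag_word xs = w}" for w
    by (rule chain_count_flags)
  have cc_pos: "0 < chain_count P lamP w \<longleftrightarrow> (\<exists>xs. flag P n xs \<and> flag_word xs = w)" for w
  proof -
    have "finite {xs. flag P n xs \<and> flag_word xs = w}"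
      using finite_flags by (rule finite_subset[rotated]) auto
    thus ?thesis unfolding cc by (auto simp: card_gt_0_iff)
  qed
  have S: "?S = {w. good w \<and> (\<exists>xs. flag P n xs \<and> flag_word xs = w)}"
  proof (intro set_eqI iffI)
    fix w assume "w \<in> ?S"
    thus "w \<in> {w. good w \<and> (\<exists>xs. flag P n xs \<and> flag_word xs = w)}"
      using cc_pos[of w] unfolding good_def NDA_def by auto
  next
    fix w assume "w \<in> {w. good w \<and> (\<exists>xs. flag P n xs \<and> flag_word xs = w)}"
    then obtain xs where "good w" "flag P n xs" "flag_word xs = w" by blast
    thus "w \<in> ?S" using cc_pos[of w] length_flag_word unfolding good_def NDA_def by auto
  qed
  have finS: "finite ?S" unfolding S by (rule finite_subset[OF _ finite_imageI[OF finite_flags]]) auto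
  have "card {c. maxchain (H t) hle c \<and> length c - 1 = n + 2 \<and> ascent_free (labels (induced_lab lamP) c)}
      = (\<Sum>xs\<in>{xs. flag P n xs \<and> \<not> flag_word xs ! 0 \<le> flag_word xs ! 1}.
          if good (flag_word xs) then ?f (flag_word xs) else 0)"
    unfolding card_ascent_free_chains good_def
    using card_admissible_steps[OF length_flag_word n_pos] by (intro sum.cong) auto
  also have "\<dots> = (\<Sum>xs\<in>F. ?f (flag_word xs))"
    unfolding F_def good_def
    by (subst sum.inter_filter[symmetric]) (auto intro: finite_subset[OF _ finite_flags] intro!: sum.cong)
  also have "\<dots> = (\<Sum>w\<in>?S. \<Sum>xs\<in>{xs \<in> F. flag_word xs = w}. ?f (flag_word xs))"
  proof -
    have "flag_word ` F \<subseteq> ?S" unfolding S F_def by auto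
    thus ?thesis by (rule sum.group[symmetric, OF finF finS])
  qed
  also have "\<dots> = (\<Sum>w\<in>?S. chain_count P lamP w * ?f w)"
  proof (rule sum.cong)
    fix w assume "w \<in> ?S"
    hence "{xs \<in> F. flag_word xs = w} = {xs. flag P n xs \<and> flag_word xs = w}"
      unfolding F_def S by auto
    thus "(\<Sum>xs\<in>{xs \<in> F. flag_word xs = w}. ?f (flag_word xs)) = chain_count P lamP w * ?f w"
      unfolding cc by simp
  qed simp
  finally show ?thesis .
qed

end

theorem theorem3p3:
  fixes P :: "'a::order set" and n t :: nat and lamP :: "'a hat \<Rightarrow> 'a hat \<Rightarrow> 'l::order"
  assumes "finite P"
    and "semipure P (\<le>)"
    and "poset_length P (\<le>) = n"
    and "\<exists>m\<in>P. \<forall>x\<in>P. x \<le> m"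
    and "t \<ge> 1"
    and "EL_labeling (hat_carrier P) (hat_le (\<le>)) lamP"
    and "n \<ge> 1"
  shows "real (card {c. maxchain (hat_carrier (rees_carrier P t n)) (hat_le (rees_le P)) c
                       \<and> length c - 1 = n + 2
                       \<and> ascent_free (labels (induced_lab lamP) c)})
       = (\<Sum>w \<in> {w \<in> NDA (n + 1). \<not> w ! 0 \<le> w ! 1 \<and> \<not> w ! (n - 1) \<le> w ! n
                               \<and> chain_count P lamP w \<noteq> 0}.
            real (chain_count P lamP w) * real t ^ (asc w + 1)
              * (1 + real t) powi (int n - 1 - 2 * int (asc w)))"
proof -
  obtain m where "m \<in> P" "\<forall>x\<in>P. x \<le> m" using assms(4) by blast
  then interpret EL_semipure_top P n m lamP
    using assms by unfold_locales auto
  show ?thesis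
    unfolding card_ascent_free_chains_by_word of_nat_sum
  proof (rule sum.cong)
    fix w assume w: "w \<in> {w \<in> NDA (n + 1). \<not> w ! 0 \<le> w ! 1 \<and> \<not> w ! (n - 1) \<le> w ! n
                              \<and> chain_count P lamP w \<noteq> 0}"
    hence "Suc (2 * asc w) \<le> n" using asc_bound[OF _ n_pos] unfolding NDA_def by auto
    hence e: "int n - 1 - 2 * int (asc w) = int (n - Suc (2 * asc w))" by simp
    show "real (chain_count P lamP w * (t ^ Suc (asc w) * Suc t ^ (n - Suc (2 * asc w))))
        = real (chain_count P lamP w) * real t ^ (asc w + 1)
          * (1 + real t) powi (int n - 1 - 2 * int (asc w))"
      unfolding e power_int_of_nat by simp
  qed simp
qed

end
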